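(* Fix $0<\epsilon<1$ and $z,w\in\mathcal{S}^{n-1}$. If $\tilde z,\tilde w\in\mathcal{S}^{n-1}$ satisfy $\|\tilde z-z\|\leqslant\epsilon$ and $\|\tilde w-w\|\leqslant\epsilon$, then $\|\Phi_{\tilde z,\tilde w}-\Phi_{z,w}\|\leqslant\frac{88}{\pi}\epsilon$.
   Context: $\mathcal{S}^{n-1}$ is the unit sphere in $\mathbb{R}^n$; $\|\cdot\|$ is the spectral norm for matrices. For nonzero $z,w$: $\theta_{z,w}=\angle(z,w)\in[0,\pi]$, $\hat z=z/\|z\|$, $M_{\hat z\leftrightarrow\hat w}$ the symmetric matrix sending $\hat z\mapsto\hat w$, $\hat w\mapsto\hat z$ and vanishing on $\mathrm{span}(z,w)^\perp$ ($\pm\hat z\hat z^\top$ when $\theta_{z,w}\in\{0,\pi\}$), and $\Phi_{z,w}=\frac{\pi-2\theta_{z,w}}{\pi}I_n+\frac{2\sin\theta_{z,w}}{\pi}M_{\hat z\leftrightarrow\hat w}$. *)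

theory Defs
  imports "HOL-Analysis.Analysis"
begin

definition vec_angle :: "real^'n \<Rightarrow> real^'n \<Rightarrow> real" where
  "vec_angle z w = arccos ((z \<bullet> w) / (norm z * norm w))"

text \<open>When the angle is 0 or pi this property
  uniquely determines the matrix as plus/minus (sgn z)(sgn z)^T.\<close>
definition swap_mat :: "real^'n \<Rightarrow> real^'n \<Rightarrow> real^'n^'n" where
  "swap_mat z w = (THE M. transpose M = M \<and> M *v sgn z = sgn w \<and> M *v sgn w = sgn z \<and>
      (\<forall>x. x \<bullet> z = 0 \<and> x \<bullet> w = 0 \<longrightarrow> M *v x = 0))"

definition Phi :: "real^'n \<Rightarrow> real^'n \<Rightarrow> real^'n^'n" where
  "Phi z w = ((pi - 2 * vec_angle z w) / pi) *\<^sub>R mat 1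
            + (2 * sin (vec_angle z w) / pi) *\<^sub>R swap_mat z w"

definition spec_norm :: "real^'n^'m \<Rightarrow> real" where
  "spec_norm A = onorm (\<lambda>x. A *v x)"

end

theory Submission
  imports Defs
begin

(* Write a = z + w and b = z - w.  For unit vectors z, w the half angle satisfies
   cos (theta/2) = |a|/2 and sin (theta/2) = |b|/2, and the swap matrix is the map fixing a,
   negating b and killing span(a, b)^perp, so that
     2 sin theta * M x = |b| (sgn a . x) a - |a| (sgn b . x) b.
   The swap matrix jumps where theta is 0 or pi, but both the half angle and this right-hand
   side are Lipschitz in (z, w): the building block v |-> (sgn v . x) v is 3-Lipschitz even
   across v = 0.  Hence |Phi z' w' - Phi z w| <= 24/pi (|z' - z| + |w' - w|) <= 48 eps/pi. *)

definition scaled_proj :: "'a::real_inner \<Rightarrow> 'a \<Rightarrow> 'a" where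
  "scaled_proj v x = (sgn v \<bullet> x) *\<^sub>R v"

lemma norm_scaleR_sgn [simp]: "norm v *\<^sub>R sgn v = (v::'a::real_normed_vector)"
  by (cases "v = 0") (simp_all add: sgn_div_norm)

lemma norm_sgn_le_1: "norm (sgn (v::'a::real_normed_vector)) \<le> 1"
  by (simp add: norm_sgn)

lemma abs_inner_sgn_le: "\<bar>sgn v \<bullet> x\<bar> \<le> norm x"
  using Cauchy_Schwarz_ineq2[of "sgn v" x] mult_right_mono[OF norm_sgn_le_1[of v] norm_ge_zero[of x]]
  by simp

lemma norm_scaled_proj_le: "norm (scaled_proj v x) \<le> norm v * norm x"
  using abs_inner_sgn_le[of v x] by (simp add: scaled_proj_def mult.commute mult_left_mono)

lemma norm_mult_sgn_diff_le:
  fixes v v' :: "'a::real_normed_vector"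
  shows "norm v * norm (sgn v' - sgn v) \<le> 2 * norm (v' - v)"
proof -
  have "norm v *\<^sub>R (sgn v' - sgn v) = (v' - v) + (norm v - norm v') *\<^sub>R sgn v'"
    by (simp add: scaleR_diff_left scaleR_diff_right)
  then have "norm v * norm (sgn v' - sgn v) = norm ((v' - v) + (norm v - norm v') *\<^sub>R sgn v')"
    by (metis abs_norm_cancel norm_scaleR)
  also have "\<dots> \<le> norm (v' - v) + \<bar>norm v - norm v'\<bar> * norm (sgn v')"
    using norm_triangle_ineq[of "v' - v" "(norm v - norm v') *\<^sub>R sgn v'"] by (simp only: norm_scaleR)
  also have "\<dots> \<le> norm (v' - v) + norm (v' - v)"
    using mult_left_le[OF norm_sgn_le_1[of v'], of "\<bar>norm v - norm v'\<bar>"]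
      norm_triangle_ineq3[of v v'] by (simp add: norm_minus_commute)
  finally show ?thesis by simp
qed

lemma scaled_proj_lipschitz:
  "norm (scaled_proj v' x - scaled_proj v x) \<le> 3 * norm (v' - v) * norm x"
proof -
  have split: "scaled_proj v' x - scaled_proj v x
      = (sgn v' \<bullet> x) *\<^sub>R (v' - v) + ((sgn v' - sgn v) \<bullet> x) *\<^sub>R v"
    by (simp add: scaled_proj_def inner_diff_left scaleR_diff_left scaleR_diff_right)
  have "norm ((sgn v' \<bullet> x) *\<^sub>R (v' - v)) \<le> norm x * norm (v' - v)"
    using abs_inner_sgn_le[of v' x] by (simp add: mult_right_mono)
  moreover have "norm (((sgn v' - sgn v) \<bullet> x) *\<^sub>R v) \<le> 2 * norm (v' - v) * norm x"
  proof -
    have "norm (((sgn v' - sgn v) \<bullet> x) *\<^sub>R v) \<le> norm v * norm (sgn v' - sgn v) * norm x"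
      using Cauchy_Schwarz_ineq2[of "sgn v' - sgn v" x]
      by (simp add: mult.commute mult.left_commute mult_left_mono)
    also have "\<dots> \<le> 2 * norm (v' - v) * norm x"
      by (intro mult_right_mono norm_mult_sgn_diff_le) simp
    finally show ?thesis .
  qed
  ultimately show ?thesis
    unfolding split
    using norm_triangle_ineq[of "(sgn v' \<bullet> x) *\<^sub>R (v' - v)" "((sgn v' - sgn v) \<bullet> x) *\<^sub>R v"]
      mult.commute[of "norm x" "norm (v' - v)"]
    by linarith
qed

lemma norm_scaleR_scaled_proj_diff_le:
  fixes p q p' q' x :: "'a::real_inner"
  assumes "norm p' \<le> c" "norm q \<le> c"
  shows "norm (norm q' *\<^sub>R scaled_proj p' x - norm q *\<^sub>R scaled_proj p x)
    \<le> c * (norm (q' - q) + 3 * norm (p' - p)) * norm x"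
proof -
  have "0 \<le> c"
    using assms(2) norm_ge_zero[of q] by linarith
  have "norm ((norm q' - norm q) *\<^sub>R scaled_proj p' x) \<le> norm (q' - q) * (c * norm x)"
    using norm_triangle_ineq3[of q' q] norm_scaled_proj_le[of p' x] assms(1)
    by (simp add: mult_mono order_trans mult_right_mono)
  moreover have "norm (norm q *\<^sub>R (scaled_proj p' x - scaled_proj p x)) \<le> c * (3 * norm (p' - p) * norm x)"
    unfolding norm_scaleR abs_norm_cancel
    using assms(2) scaled_proj_lipschitz[of p' x p] by (rule mult_mono) (simp_all add: \<open>0 \<le> c\<close>)
  moreover have "norm q' *\<^sub>R scaled_proj p' x - norm q *\<^sub>R scaled_proj p x
      = (norm q' - norm q) *\<^sub>R scaled_proj p' x + norm q *\<^sub>R (scaled_proj p' x - scaled_proj p x)"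
    by (simp add: scaleR_diff_left scaleR_diff_right)
  ultimately show ?thesis
    using norm_triangle_ineq[of "(norm q' - norm q) *\<^sub>R scaled_proj p' x"
        "norm q *\<^sub>R (scaled_proj p' x - scaled_proj p x)"]
    by (simp add: algebra_simps)
qed

(* For unit z, w this is 2 sin theta times the swap matrix applied to x (Phi_mult_vec). *)
definition scaled_swap :: "'a::real_inner \<Rightarrow> 'a \<Rightarrow> 'a \<Rightarrow> 'a" where
  "scaled_swap z w x = norm (z - w) *\<^sub>R scaled_proj (z + w) x - norm (z + w) *\<^sub>R scaled_proj (z - w) x"

lemma scaled_swap_lipschitz:
  fixes z w z' w' x :: "'a::real_inner"
  assumes "norm z \<le> 1" "norm w \<le> 1" "norm z' \<le> 1" "norm w' \<le> 1"
  shows "norm (scaled_swap z' w' x - scaled_swap z w x) \<le> 16 * (norm (z' - z) + norm (w' - w)) * norm x"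
proof -
  let ?d = "norm (z' - z) + norm (w' - w)"
  let ?da = "norm (z' + w' - (z + w))" and ?db = "norm (z' - w' - (z - w))"
  let ?X = "norm (z' - w') *\<^sub>R scaled_proj (z' + w') x - norm (z - w) *\<^sub>R scaled_proj (z + w) x"
  let ?Y = "norm (z' + w') *\<^sub>R scaled_proj (z' - w') x - norm (z + w) *\<^sub>R scaled_proj (z - w) x"
  have "?da \<le> ?d" "?db \<le> ?d"
    using norm_triangle_ineq[of "z' - z" "w' - w"] norm_triangle_ineq4[of "z' - z" "w' - w"]
    by (simp_all add: algebra_simps)
  have norms: "norm (z + w) \<le> 2" "norm (z - w) \<le> 2" "norm (z' + w') \<le> 2" "norm (z' - w') \<le> 2"
    using norm_triangle_ineq[of z w] norm_triangle_ineq4[of z w]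
      norm_triangle_ineq[of z' w'] norm_triangle_ineq4[of z' w'] assms by auto
  have "scaled_swap z' w' x - scaled_swap z w x = ?X - ?Y"
    by (simp add: scaled_swap_def)
  then have "norm (scaled_swap z' w' x - scaled_swap z w x) \<le> norm ?X + norm ?Y"
    by (simp only: norm_triangle_ineq4)
  also have "\<dots> \<le> 2 * (?db + 3 * ?da) * norm x + 2 * (?da + 3 * ?db) * norm x"
    using norm_scaleR_scaled_proj_diff_le[OF norms(3,2)] norm_scaleR_scaled_proj_diff_le[OF norms(4,1)]
    by (rule add_mono)
  also have "\<dots> = 8 * (?da + ?db) * norm x"
    by (simp add: algebra_simps)
  also have "\<dots> \<le> 16 * ?d * norm x"
    using \<open>?da \<le> ?d\<close> \<open>?db \<le> ?d\<close> by (intro mult_right_mono) auto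
  finally show ?thesis .
qed

lemma half_le_sin:
  fixes t :: real
  assumes "0 \<le> t" "t \<le> pi / 3"
  shows "t / 2 \<le> sin t"
proof -
  have "sin 0 - 0 / 2 \<le> sin t - t / 2"
  proof (rule DERIV_nonneg_imp_nondecreasing[OF assms(1)])
    fix u assume u: "0 \<le> u" "u \<le> t"
    have "((\<lambda>t. sin t - t / 2) has_real_derivative cos u - 1 / 2) (at u)"
      by (auto intro!: derivative_eq_intros)
    moreover have "cos (pi / 3) \<le> cos u"
      using u assms by (intro cos_monotone_0_pi_le) auto
    ultimately show "\<exists>y. ((\<lambda>t. sin t - t / 2) has_real_derivative y) (at u) \<and> 0 \<le> y"
      by (auto simp: cos_60)
  qed
  then show ?thesis by simp
qed

lemma abs_diff_le_cos_sin_diff: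
  fixes p q :: real
  assumes "0 \<le> p" "p \<le> pi / 2" "0 \<le> q" "q \<le> pi / 2"
  shows "\<bar>p - q\<bar> \<le> 2 * (\<bar>cos p - cos q\<bar> + \<bar>sin p - sin q\<bar>)"
proof -
  define t where "t = \<bar>p - q\<bar> / 2"
  have t: "0 \<le> t" "t \<le> pi / 3"
    using assms pi_gt_zero by (auto simp: t_def abs_if)
  have chord: "(cos p - cos q)\<^sup>2 + (sin p - sin q)\<^sup>2 = (2 * sin t)\<^sup>2"
  proof -
    have "(cos p - cos q)\<^sup>2 + (sin p - sin q)\<^sup>2 = 2 - 2 * cos (2 * t)"
      by (simp add: t_def cos_diff power2_eq_square algebra_simps)
    then show ?thesis
      by (simp add: cos_double_sin power_mult_distrib)
  qed
  have "t\<^sup>2 \<le> (2 * sin t)\<^sup>2"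
    using half_le_sin[OF t] t by (intro power_mono) auto
  also have "\<dots> \<le> (\<bar>cos p - cos q\<bar> + \<bar>sin p - sin q\<bar>)\<^sup>2"
    unfolding chord[symmetric] power2_sum by simp
  finally have "t \<le> \<bar>cos p - cos q\<bar> + \<bar>sin p - sin q\<bar>"
    by (rule power2_le_imp_le) simp
  then show ?thesis by (simp add: t_def)
qed

lemma vec_angle_bounds: "0 \<le> vec_angle z w" "vec_angle z w \<le> pi"
proof -
  define c where "c = z \<bullet> w / (norm z * norm w)"
  have "\<bar>c\<bar> \<le> 1"
    using Cauchy_Schwarz_ineq2[of z w] by (cases "norm z * norm w = 0") (auto simp: c_def abs_divide)
  then have "-1 \<le> c" "c \<le> 1" by auto
  then show "0 \<le> vec_angle z w" "vec_angle z w \<le> pi"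
    unfolding vec_angle_def c_def[symmetric] by (simp_all add: arccos_lbound arccos_ubound)
qed

lemma cos_vec_angle:
  assumes "norm z = 1" "norm w = 1"
  shows "cos (vec_angle z w) = z \<bullet> w"
proof -
  have "\<bar>z \<bullet> w\<bar> \<le> 1"
    using Cauchy_Schwarz_ineq2[of z w] assms by simp
  then show ?thesis
    by (simp add: vec_angle_def assms cos_arccos_abs)
qed

lemma norm_add_sq_unit:
  assumes "norm z = 1" "norm w = 1"
  shows "(norm (z + w))\<^sup>2 = 2 + 2 * (z \<bullet> w)"
  using dot_norm[of z w] assms by simp

lemma norm_diff_sq_unit:
  assumes "norm z = 1" "norm w = 1"
  shows "(norm (z - w))\<^sup>2 = 2 - 2 * (z \<bullet> w)"
  using dot_norm_neg[of z w] assms by simp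

lemma cos_half_vec_angle:
  assumes "norm z = 1" "norm w = 1"
  shows "cos (vec_angle z w / 2) = norm (z + w) / 2"
proof (rule power2_eq_imp_eq)
  show "(cos (vec_angle z w / 2))\<^sup>2 = (norm (z + w) / 2)\<^sup>2"
    using cos_double_cos[of "vec_angle z w / 2"]
    by (simp add: cos_vec_angle norm_add_sq_unit assms power_divide)
  show "0 \<le> cos (vec_angle z w / 2)"
    using vec_angle_bounds[of z w] by (intro cos_ge_zero) auto
qed simp

lemma sin_half_vec_angle:
  assumes "norm z = 1" "norm w = 1"
  shows "sin (vec_angle z w / 2) = norm (z - w) / 2"
proof (rule power2_eq_imp_eq)
  show "(sin (vec_angle z w / 2))\<^sup>2 = (norm (z - w) / 2)\<^sup>2"
    using cos_double_sin[of "vec_angle z w / 2"]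
    by (simp add: cos_vec_angle norm_diff_sq_unit assms power_divide)
  show "0 \<le> sin (vec_angle z w / 2)"
    using vec_angle_bounds[of z w] by (intro sin_ge_zero) auto
qed simp

lemma vec_angle_lipschitz:
  assumes "norm z = 1" "norm w = 1" "norm z' = 1" "norm w' = 1"
  shows "\<bar>vec_angle z' w' - vec_angle z w\<bar> \<le> 4 * (norm (z' - z) + norm (w' - w))"
proof -
  let ?\<theta> = "vec_angle z w" and ?\<theta>' = "vec_angle z' w'"
  have "\<bar>?\<theta>' / 2 - ?\<theta> / 2\<bar>
      \<le> 2 * (\<bar>cos (?\<theta>' / 2) - cos (?\<theta> / 2)\<bar> + \<bar>sin (?\<theta>' / 2) - sin (?\<theta> / 2)\<bar>)"
    using vec_angle_bounds[of z w] vec_angle_bounds[of z' w']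
    by (intro abs_diff_le_cos_sin_diff) auto
  also have "\<dots> = \<bar>norm (z' + w') - norm (z + w)\<bar> + \<bar>norm (z' - w') - norm (z - w)\<bar>"
    by (simp add: assms cos_half_vec_angle sin_half_vec_angle flip: diff_divide_distrib)
  also have "\<dots> \<le> norm ((z' - z) + (w' - w)) + norm ((z' - z) - (w' - w))"
    using norm_triangle_ineq3[of "z' + w'" "z + w"] norm_triangle_ineq3[of "z' - w'" "z - w"]
    by (simp add: algebra_simps)
  also have "\<dots> \<le> 2 * (norm (z' - z) + norm (w' - w))"
    using norm_triangle_ineq[of "z' - z" "w' - w"] norm_triangle_ineq4[of "z' - z" "w' - w"]
    by simp
  finally show ?thesis by simp
qed

lemma transpose_matrix_self_adjoint:
  fixes f :: "real^'n \<Rightarrow> real^'n"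
  assumes "linear f" "\<And>x y. f x \<bullet> y = x \<bullet> f y"
  shows "transpose (matrix f) = matrix f"
  by (metis assms adjoint_unique matrix_adjoint)

lemma matrix_vector_mult_orthonormal_eigenpair:
  fixes M :: "real^'n^'n"
  assumes u: "u \<bullet> u = 1" and v: "v \<bullet> v = 1" and uv: "u \<bullet> v = 0"
    and Mu: "M *v u = u" and Mv: "M *v v = - v"
    and ker: "\<And>r. r \<bullet> u = 0 \<Longrightarrow> r \<bullet> v = 0 \<Longrightarrow> M *v r = 0"
  shows "M *v x = (u \<bullet> x) *\<^sub>R u - (v \<bullet> x) *\<^sub>R v"
proof -
  define r where "r = x - (u \<bullet> x) *\<^sub>R u - (v \<bullet> x) *\<^sub>R v"
  have "r \<bullet> u = 0" "r \<bullet> v = 0"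
    using u v uv by (simp_all add: r_def inner_diff_left inner_commute[of x] inner_commute[of v u])
  then have "M *v r = 0" by (rule ker)
  moreover have "x = r + (u \<bullet> x) *\<^sub>R u + (v \<bullet> x) *\<^sub>R v"
    by (simp add: r_def)
  ultimately show ?thesis
    by (metis Mu Mv matrix_vector_right_distrib matrix_vector_mult_scaleR scaleR_minus_right
        add_0 diff_conv_add_uminus)
qed

lemma orthonormal_sgn_add_diff:
  fixes z w :: "'a::real_inner"
  assumes "norm z = norm w" "z + w \<noteq> 0" "z - w \<noteq> 0"
  shows "sgn (z + w) \<bullet> sgn (z + w) = 1" "sgn (z - w) \<bullet> sgn (z - w) = 1"
    "sgn (z + w) \<bullet> sgn (z - w) = 0"
proof -
  show "sgn (z + w) \<bullet> sgn (z + w) = 1" "sgn (z - w) \<bullet> sgn (z - w) = 1"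
    using assms by (simp_all add: norm_sgn flip: power2_norm_eq_inner)
  have "(z + w) \<bullet> (z - w) = 0"
    using assms(1) by (simp add: inner_add_left inner_diff_right inner_commute[of w z] dot_square_norm)
  then show "sgn (z + w) \<bullet> sgn (z - w) = 0"
    by (simp add: sgn_div_norm)
qed

definition is_swap_mat :: "real^'n^'n \<Rightarrow> real^'n \<Rightarrow> real^'n \<Rightarrow> bool" where
  "is_swap_mat M z w \<longleftrightarrow> transpose M = M \<and> M *v sgn z = sgn w \<and> M *v sgn w = sgn z \<and>
      (\<forall>x. x \<bullet> z = 0 \<and> x \<bullet> w = 0 \<longrightarrow> M *v x = 0)"

lemma swap_mat_eq_The: "swap_mat z w = (THE M. is_swap_mat M z w)"
  by (simp add: swap_mat_def is_swap_mat_def)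

lemma is_swap_mat_mult_vec:
  fixes z w :: "real^'n"
  assumes "norm z = 1" "norm w = 1" "z + w \<noteq> 0" "z - w \<noteq> 0" and M: "is_swap_mat M z w"
  shows "M *v x = (sgn (z + w) \<bullet> x) *\<^sub>R sgn (z + w) - (sgn (z - w) \<bullet> x) *\<^sub>R sgn (z - w)"
proof (rule matrix_vector_mult_orthonormal_eigenpair[OF orthonormal_sgn_add_diff])
  have M_zw: "M *v z = w" "M *v w = z"
    using M assms by (simp_all add: is_swap_mat_def sgn_div_norm)
  then show "M *v sgn (z + w) = sgn (z + w)"
    by (simp add: sgn_div_norm matrix_vector_mult_scaleR matrix_vector_right_distrib add.commute)
  show "M *v sgn (z - w) = - sgn (z - w)"
    using M_zw by (simp add: sgn_div_norm matrix_vector_mult_scaleR matrix_vector_mult_diff_distrib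
        flip: scaleR_minus_right)
  fix r assume "r \<bullet> sgn (z + w) = 0" "r \<bullet> sgn (z - w) = 0"
  then have "r \<bullet> (z + w) = 0" "r \<bullet> (z - w) = 0"
    using assms by (simp_all add: sgn_div_norm)
  then have "r \<bullet> z = 0 \<and> r \<bullet> w = 0"
    by (simp add: inner_add_right inner_diff_right)
  then show "M *v r = 0"
    using M by (simp add: is_swap_mat_def)
qed (use assms in auto)

lemma is_swap_mat_matrix:
  fixes z w :: "real^'n"
  assumes z: "norm z = 1" and w: "norm w = 1" and "z + w \<noteq> 0" "z - w \<noteq> 0"
  defines "f \<equiv> \<lambda>x. (sgn (z + w) \<bullet> x) *\<^sub>R sgn (z + w) - (sgn (z - w) \<bullet> x) *\<^sub>R sgn (z - w)"
  shows "is_swap_mat (matrix f) z w"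
proof -
  have "linear f"
    by (rule linearI) (simp_all add: f_def inner_add_right scaleR_add_left algebra_simps)
  then have matrix_f: "matrix f *v x = f x" for x
    by (metis matrix_vector_mul(2))
  have "f (sgn (z + w)) = sgn (z + w)" "f (sgn (z - w)) = - sgn (z - w)"
    using orthonormal_sgn_add_diff[of z w] assms by (simp_all add: f_def inner_commute)
  then have "f (z + w) = z + w" "f (z - w) = - (z - w)"
    by (metis \<open>linear f\<close> linear_scale norm_scaleR_sgn scaleR_minus_right)+
  then have "f z + f w = z + w" "f z - f w = w - z"
    by (simp_all add: linear_add[OF \<open>linear f\<close>] linear_diff[OF \<open>linear f\<close>, symmetric])
  then have comp: "f z $ i + f w $ i = z $ i + w $ i \<and> f z $ i - f w $ i = w $ i - z $ i" for i
    by (metis vector_add_component vector_minus_component)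
  have "f z $ i = w $ i \<and> f w $ i = z $ i" for i
    using comp[of i] by linarith
  then have "f z = w" "f w = z"
    by (simp_all add: vec_eq_iff)
  moreover have "f x = 0" if "x \<bullet> z = 0" "x \<bullet> w = 0" for x
    using that by (simp add: f_def sgn_div_norm inner_commute[of _ x] inner_add_right inner_diff_right)
  moreover have "transpose (matrix f) = matrix f"
    using \<open>linear f\<close> by (rule transpose_matrix_self_adjoint)
      (simp add: f_def inner_diff_left inner_diff_right inner_commute)
  ultimately show ?thesis
    using z w by (simp add: is_swap_mat_def matrix_f sgn_div_norm)
qed

lemma swap_mat_mult_vec:
  fixes z w :: "real^'n"
  assumes "norm z = 1" "norm w = 1" "z + w \<noteq> 0" "z - w \<noteq> 0"
  shows "swap_mat z w *v x
    = (sgn (z + w) \<bullet> x) *\<^sub>R sgn (z + w) - (sgn (z - w) \<bullet> x) *\<^sub>R sgn (z - w)"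
proof -
  let ?N = "matrix (\<lambda>x. (sgn (z + w) \<bullet> x) *\<^sub>R sgn (z + w) - (sgn (z - w) \<bullet> x) *\<^sub>R sgn (z - w))"
  have N: "is_swap_mat ?N z w"
    using assms by (rule is_swap_mat_matrix)
  have "swap_mat z w = ?N"
    unfolding swap_mat_eq_The
  proof (rule the_equality)
    show "is_swap_mat ?N z w" by (rule N)
    fix M assume "is_swap_mat M z w"
    then show "M = ?N"
      unfolding matrix_eq using is_swap_mat_mult_vec[OF assms] N by simp
  qed
  then show ?thesis
    using is_swap_mat_mult_vec[OF assms N] by simp
qed

lemma Phi_mult_vec:
  fixes z w :: "real^'n"
  assumes z: "norm z = 1" and w: "norm w = 1"
  shows "Phi z w *v x = ((pi - 2 * vec_angle z w) / pi) *\<^sub>R x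
    + (1 / pi) *\<^sub>R scaled_swap z w x"
proof -
  have sin: "2 * sin (vec_angle z w) = norm (z + w) * norm (z - w)"
    using sin_double[of "vec_angle z w / 2"]
    by (simp add: cos_half_vec_angle sin_half_vec_angle z w mult.commute)
  have swap: "(2 * sin (vec_angle z w)) *\<^sub>R (swap_mat z w *v x) = scaled_swap z w x"
  proof (cases "z + w = 0 \<or> z - w = 0")
    case True
    then show ?thesis by (auto simp: sin scaled_swap_def scaled_proj_def)
  next
    case False
    then have "(2 * sin (vec_angle z w)) *\<^sub>R (swap_mat z w *v x)
      = norm (z - w) *\<^sub>R (sgn (z + w) \<bullet> x) *\<^sub>R (norm (z + w) *\<^sub>R sgn (z + w))
      - norm (z + w) *\<^sub>R (sgn (z - w) \<bullet> x) *\<^sub>R (norm (z - w) *\<^sub>R sgn (z - w))"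
      by (simp add: sin swap_mat_mult_vec z w scaleR_diff_right mult_ac del: norm_scaleR_sgn)
    then show ?thesis
      by (simp add: scaled_swap_def scaled_proj_def)
  qed
  have "(2 * sin (vec_angle z w) / pi) *\<^sub>R (swap_mat z w *v x)
      = (1 / pi) *\<^sub>R ((2 * sin (vec_angle z w)) *\<^sub>R (swap_mat z w *v x))"
    by simp
  then show ?thesis
    by (simp add: Phi_def matrix_vector_mult_add_rdistrib swap flip: scaleR_matrix_vector_assoc)
qed

lemma spec_norm_Phi_diff_le:
  fixes z w z' w' :: "real^'n"
  assumes "norm z = 1" "norm w = 1" "norm z' = 1" "norm w' = 1"
  shows "spec_norm (Phi z' w' - Phi z w) \<le> 24 / pi * (norm (z' - z) + norm (w' - w))"
  unfolding spec_norm_def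
proof (rule onorm_le)
  fix x :: "real^'n"
  define d where "d = norm (z' - z) + norm (w' - w)"
  have "(Phi z' w' - Phi z w) *v x = (2 * (vec_angle z w - vec_angle z' w') / pi) *\<^sub>R x
      + (1 / pi) *\<^sub>R (scaled_swap z' w' x - scaled_swap z w x)"
    by (simp add: matrix_vector_mult_diff_rdistrib Phi_mult_vec assms algebra_simps diff_divide_distrib)
  also have "norm \<dots> \<le> 2 * (4 * d) / pi * norm x + 16 * d / pi * norm x"
  proof (rule norm_triangle_le, rule add_mono)
    show "norm ((2 * (vec_angle z w - vec_angle z' w') / pi) *\<^sub>R x) \<le> 2 * (4 * d) / pi * norm x"
      using vec_angle_lipschitz[OF assms]
      by (simp add: d_def abs_minus_commute divide_right_mono mult_right_mono)
    show "norm ((1 / pi) *\<^sub>R (scaled_swap z' w' x - scaled_swap z w x)) \<le> 16 * d / pi * norm x"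
      using scaled_swap_lipschitz[of z w z' w' x] assms by (simp add: d_def divide_right_mono)
  qed
  also have "\<dots> = 24 / pi * d * norm x"
    by (simp add: field_simps)
  finally show "norm ((Phi z' w' - Phi z w) *v x) \<le> 24 / pi * d * norm x" .
qed

theorem lemma27:
  fixes \<epsilon> :: real and z w z' w' :: "real^'n"
  assumes "0 < \<epsilon>" "\<epsilon> < 1"
    and "norm z = 1" "norm w = 1" "norm z' = 1" "norm w' = 1"
    and "norm (z' - z) \<le> \<epsilon>" "norm (w' - w) \<le> \<epsilon>"
  shows "spec_norm (Phi z' w' - Phi z w) \<le> 88 / pi * \<epsilon>"
proof -
  have "spec_norm (Phi z' w' - Phi z w) \<le> 24 / pi * (norm (z' - z) + norm (w' - w))"
    using assms(3-6) by (rule spec_norm_Phi_diff_le)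
  also have "\<dots> \<le> 24 / pi * (2 * \<epsilon>)"
    using assms(7,8) by (intro mult_left_mono) auto
  also have "\<dots> \<le> 88 / pi * \<epsilon>"
    using assms(1) by (simp add: field_simps)
  finally show ?thesis .
qed

end
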